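(* Let $\Delta>1$ and $D\le n/2$. Suppose $M\in\mathbb{F}_2^{m\times n}$ is a matrix capable of $\Delta$-approximating $d=\|\mathbf{x}\|_0$ (in the group testing model) for all $\mathbf{x}\in\mathbb{F}_2^n$ with $d\le D$. Then necessarily $$m\ge\left(\frac{D}{\Delta^2}-1\right)\log\frac{n}{D-\Delta^2}-\left(\frac{D}{\Delta^2}-1\right)\log e=\Omega\!\left(\frac{D}{\Delta^2}\log\frac{n}{D}\right).$$
   Context: $\log$ denotes $\log_2$. $\|\mathbf{x}\|_0$ is the number of nonzero entries of $\mathbf{x}$. Group testing model: for $M\in\mathbb{F}_2^{m\times n}$ and $\mathbf{x}\in\mathbb{F}_2^n$, $M\odot\mathbf{x}\in\mathbb{F}_2^m$ is defined by $(M\odot\mathbf{x})_i=\bigvee_{j:M_{ij}=1}\mathbf{x}_j$ (logical OR). $M$ is capable of $\Delta$-approximating $d$ when $d\le D$ if there is a deterministic decoder which, given only $M\odot\mathbf{x}$, outputs $\hat d$ with $\frac1\Delta\le\frac{\hat d}{d}\le\Delta$ for every $\mathbf{x}$ with $d=\|\mathbf{x}\|_0\le D$. *)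

theory Defs
  imports Complex_Main
begin

text \<open>A binary m x n matrix over F_2 is a function M :: nat => nat => bool, entries M i j
  for i < m, j < n.  A vector x in F_2^n is x :: nat => bool, coordinates j < n.\<close>

definition weight :: "nat \<Rightarrow> (nat \<Rightarrow> bool) \<Rightarrow> nat" where
  "weight n x = card {j. j < n \<and> x j}"

definition gt_outcome :: "nat \<Rightarrow> nat \<Rightarrow> (nat \<Rightarrow> nat \<Rightarrow> bool) \<Rightarrow> (nat \<Rightarrow> bool) \<Rightarrow> (nat \<Rightarrow> bool)" where
  "gt_outcome m n M x = (\<lambda>i. i < m \<and> (\<exists>j<n. M i j \<and> x j))"

text \<open>M is capable of Delta-approximating d when d <= D: there is a deterministic decoder
  which, from the outcome alone, outputs an estimate within ratio Delta of d
  (for every nonzero x, the ratio being undefined for d = 0).\<close>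
definition approx_capable :: "nat \<Rightarrow> nat \<Rightarrow> (nat \<Rightarrow> nat \<Rightarrow> bool) \<Rightarrow> real \<Rightarrow> nat \<Rightarrow> bool" where
  "approx_capable m n M \<Delta> D \<longleftrightarrow>
     (\<exists>dec :: (nat \<Rightarrow> bool) \<Rightarrow> real. \<forall>x :: nat \<Rightarrow> bool.
        1 \<le> weight n x \<and> weight n x \<le> D \<longrightarrow>
          1 / \<Delta> \<le> dec (gt_outcome m n M x) / real (weight n x) \<and>
          dec (gt_outcome m n M x) / real (weight n x) \<le> \<Delta>)"

end

theory Submission
  imports Defs "HOL-Analysis.Harmonic_Numbers"
begin

text \<open>Let \<open>a\<close> be the largest integer below \<open>D/\<Delta>\<^sup>2\<close> and \<open>b = \<lfloor>\<Delta>\<^sup>2 a\<rfloor>\<close>. A decoder cannot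
  confuse an \<open>a\<close>-set with a \<open>(b+1)\<close>-set, since no estimate is within ratio \<open>\<Delta>\<close> of both.
  The items all of whose tests are positive under an outcome \<open>v\<close> can be added to any set
  with outcome \<open>v\<close> without changing it, so there are at most \<open>b\<close> of them whenever \<open>v\<close> is
  the outcome of an \<open>a\<close>-set. Hence each of the at most \<open>2\<^sup>m\<close> outcomes is shared by at most
  \<open>b choose a\<close> sets of size \<open>a\<close>, giving \<open>(n/b)\<^sup>a \<le> (n choose a)/(b choose a) \<le> 2\<^sup>m\<close>.
  Comparing \<open>a ln (n/(\<Delta>\<^sup>2 a))\<close> with its value at \<open>t = D/\<Delta>\<^sup>2 - 1\<close> gives the bound.\<close>

lemma card_le_card_image_mult:
  assumes "finite A" and "\<And>v. v \<in> f ` A \<Longrightarrow> card {x \<in> A. f x = v} \<le> k"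
  shows "card A \<le> card (f ` A) * k"
proof -
  have "card A = card (\<Union>v\<in>f ` A. {x \<in> A. f x = v})"
    by (intro arg_cong[where f = card]) auto
  also have "\<dots> \<le> (\<Sum>v\<in>f ` A. card {x \<in> A. f x = v})"
    by (rule card_UN_le) (use assms(1) in simp)
  also have "\<dots> \<le> (\<Sum>v\<in>f ` A. k)" by (rule sum_mono) (use assms(2) in simp)
  finally show ?thesis by simp
qed

lemma card_image_gt_outcome_le: "card (gt_outcome m n M ` X) \<le> 2 ^ m"
proof -
  have "gt_outcome m n M ` X \<subseteq> (\<lambda>I i. i \<in> I) ` Pow {..<m}"
  proof
    fix v assume "v \<in> gt_outcome m n M ` X"
    then have "v = (\<lambda>i. i \<in> {i. i < m \<and> v i})" by (auto simp: gt_outcome_def)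
    then show "v \<in> (\<lambda>I i. i \<in> I) ` Pow {..<m}" by blast
  qed
  then have "card (gt_outcome m n M ` X) \<le> card ((\<lambda>I i. i \<in> I) ` Pow {..<m})"
    by (rule card_mono[rotated]) simp
  also have "\<dots> \<le> card (Pow {..<m})" by (rule card_image_le) simp
  finally show ?thesis by (simp add: card_Pow)
qed

lemma weight_indicator: "S \<subseteq> {..<n} \<Longrightarrow> weight n (\<lambda>j. j \<in> S) = card S"
proof -
  assume "S \<subseteq> {..<n}"
  then have "{j. j < n \<and> j \<in> S} = S" by auto
  then show ?thesis by (simp add: weight_def)
qed

definition consistent_items :: "nat \<Rightarrow> nat \<Rightarrow> (nat \<Rightarrow> nat \<Rightarrow> bool) \<Rightarrow> (nat \<Rightarrow> bool) \<Rightarrow> nat set"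
  where "consistent_items m n M v = {j. j < n \<and> (\<forall>i<m. M i j \<longrightarrow> v i)}"

lemma finite_consistent_items: "finite (consistent_items m n M v)"
  by (simp add: consistent_items_def)

lemma subset_consistent_items:
  "S \<subseteq> {..<n} \<Longrightarrow> S \<subseteq> consistent_items m n M (gt_outcome m n M (\<lambda>j. j \<in> S))"
  by (auto simp: consistent_items_def gt_outcome_def)

lemma gt_outcome_between:
  assumes "S \<subseteq> T" "T \<subseteq> consistent_items m n M (gt_outcome m n M (\<lambda>j. j \<in> S))"
  shows "gt_outcome m n M (\<lambda>j. j \<in> T) = gt_outcome m n M (\<lambda>j. j \<in> S)"
proof
  fix i
  show "gt_outcome m n M (\<lambda>j. j \<in> T) i = gt_outcome m n M (\<lambda>j. j \<in> S) i"
    using assms unfolding gt_outcome_def consistent_items_def by blast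
qed

lemma approx_capable_gt_outcome_neq:
  fixes \<Delta> :: real
  assumes "approx_capable m n M \<Delta> D" "\<Delta> > 0"
    and "S \<subseteq> {..<n}" "T \<subseteq> {..<n}" "1 \<le> card S" "card S \<le> D" "card T \<le> D"
    and "\<Delta>\<^sup>2 * card S < card T"
  shows "gt_outcome m n M (\<lambda>j. j \<in> S) \<noteq> gt_outcome m n M (\<lambda>j. j \<in> T)"
proof
  assume same: "gt_outcome m n M (\<lambda>j. j \<in> S) = gt_outcome m n M (\<lambda>j. j \<in> T)"
  obtain dec :: "(nat \<Rightarrow> bool) \<Rightarrow> real" where dec: "\<And>x. 1 \<le> weight n x \<Longrightarrow> weight n x \<le> D \<Longrightarrow>
      1 / \<Delta> \<le> dec (gt_outcome m n M x) / weight n x \<and> dec (gt_outcome m n M x) / weight n x \<le> \<Delta>"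
    using assms(1) unfolding approx_capable_def by blast
  define e where "e = dec (gt_outcome m n M (\<lambda>j. j \<in> S))"
  have "0 \<le> \<Delta>\<^sup>2 * card S" by simp
  then have "1 \<le> card T" using assms(8) by linarith
  have "e / card S \<le> \<Delta>"
    using dec[of "\<lambda>j. j \<in> S"] assms weight_indicator by (simp add: e_def)
  then have "e \<le> \<Delta> * card S" using assms(5) by (simp add: divide_le_eq)
  moreover have "1 / \<Delta> \<le> e / card T"
    using dec[of "\<lambda>j. j \<in> T"] assms \<open>1 \<le> card T\<close> weight_indicator by (simp add: e_def same)
  then have "card T \<le> \<Delta> * e" using assms(2) \<open>1 \<le> card T\<close> by (simp add: field_simps)
  ultimately have "card T \<le> \<Delta> * (\<Delta> * card S)" using assms(2) by (smt (verit) mult_left_mono)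
  then show False using assms(8) by (simp add: power2_eq_square mult.assoc)
qed

lemma card_consistent_items_le:
  fixes \<Delta> :: real
  assumes cap: "approx_capable m n M \<Delta> D" and "\<Delta> \<ge> 1"
    and S: "S \<subseteq> {..<n}" "1 \<le> card S"
    and b: "b + 1 \<le> D" "\<Delta>\<^sup>2 * card S < b + 1"
  shows "card (consistent_items m n M (gt_outcome m n M (\<lambda>j. j \<in> S))) \<le> b"
proof (rule ccontr)
  let ?U = "consistent_items m n M (gt_outcome m n M (\<lambda>j. j \<in> S))"
  assume "\<not> card ?U \<le> b"
  moreover have "card S \<le> \<Delta>\<^sup>2 * card S"
    using \<open>\<Delta> \<ge> 1\<close> by (simp add: mult_le_cancel_right1 one_le_power)
  ultimately obtain T where T: "S \<subseteq> T" "T \<subseteq> ?U" "card T = b + 1"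
    using exists_subset_between[of S "b + 1" ?U] b(2) subset_consistent_items[OF S(1)]
      finite_consistent_items by fastforce
  have "T \<subseteq> {..<n}" using T(2) by (auto simp: consistent_items_def)
  moreover have "card S \<le> D" using \<open>card S \<le> \<Delta>\<^sup>2 * card S\<close> b by linarith
  ultimately have "gt_outcome m n M (\<lambda>j. j \<in> S) \<noteq> gt_outcome m n M (\<lambda>j. j \<in> T)"
    using approx_capable_gt_outcome_neq[OF cap] assms T(3) by simp
  then show False using gt_outcome_between[OF T(1,2)] by simp
qed

lemma approx_capable_choose_le:
  fixes \<Delta> :: real
  assumes cap: "approx_capable m n M \<Delta> D" and "\<Delta> \<ge> 1"
    and "1 \<le> a" "b + 1 \<le> D" "\<Delta>\<^sup>2 * a < b + 1"
  shows "n choose a \<le> 2 ^ m * (b choose a)"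
proof -
  define A where "A = {S. S \<subseteq> {..<n} \<and> card S = a}"
  define f where "f S = gt_outcome m n M (\<lambda>j. j \<in> S)" for S
  have fiber: "card {S \<in> A. f S = v} \<le> b choose a" if "v \<in> f ` A" for v
  proof -
    obtain S0 where "S0 \<in> A" "v = f S0" using \<open>v \<in> f ` A\<close> by blast
    let ?U = "consistent_items m n M v"
    have "{S \<in> A. f S = v} \<subseteq> {S. S \<subseteq> ?U \<and> card S = a}"
      by (auto simp: A_def f_def intro: subset_consistent_items[THEN subsetD])
    then have "card {S \<in> A. f S = v} \<le> card ?U choose a"
      using card_mono[OF _ \<open>{S \<in> A. f S = v} \<subseteq> _\<close>] n_subsets[OF finite_consistent_items]
      by (simp add: finite_consistent_items)
    also have "card ?U \<le> b"
      using card_consistent_items_le[OF cap] assms \<open>S0 \<in> A\<close> \<open>v = f S0\<close>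
      by (simp add: A_def f_def)
    then have "card ?U choose a \<le> b choose a" by (rule binomial_right_mono)
    finally show ?thesis .
  qed
  have "n choose a = card A" using n_subsets[of "{..<n}" a] by (simp add: A_def)
  also have "\<dots> \<le> card (f ` A) * (b choose a)"
    by (rule card_le_card_image_mult[OF _ fiber]) (simp add: A_def)
  also have "card (f ` A) \<le> 2 ^ m"
    using card_image_gt_outcome_le[of m n M "(\<lambda>S j. j \<in> S) ` A"]
    by (simp add: f_def image_image)
  finally show ?thesis by simp
qed

lemma power_mult_choose_le:
  assumes "a \<le> b" "b \<le> n"
  shows "real n ^ a * real (b choose a) \<le> real (n choose a) * real b ^ a"
  using assms
proof (induction a)
  case 0 then show ?case by simp
next
  case (Suc a)
  have IH: "real n ^ a * real (b choose a) \<le> real (n choose a) * real b ^ a" using Suc by simp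
  have idn: "real (Suc a) * real (n choose Suc a) = real (n - a) * real (n choose a)"
    using binomial_absorption[of a n] binomial_absorb_comp[of n a] by (metis of_nat_mult)
  have idb: "real (Suc a) * real (b choose Suc a) = real (b - a) * real (b choose a)"
    using binomial_absorption[of a b] binomial_absorb_comp[of b a] by (metis of_nat_mult)
  have na: "real (n - a) = real n - real a" using Suc.prems by simp
  have ba: "real (b - a) = real b - real a" using Suc.prems by simp
  have key: "real n * (real b - real a) \<le> (real n - real a) * real b"
  proof -
    have "real a * real b \<le> real a * real n" using Suc.prems by (intro mult_left_mono) auto
    thus ?thesis by (simp add: algebra_simps)
  qed
  have "real (Suc a) * (real n ^ Suc a * real (b choose Suc a))
      = real n * real n ^ a * (real (Suc a) * real (b choose Suc a))" by (simp add: algebra_simps)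
  also have "\<dots> = real n * (real b - real a) * (real n ^ a * real (b choose a))"
    unfolding idb ba by (simp add: algebra_simps)
  also have "\<dots> \<le> (real n - real a) * real b * (real n ^ a * real (b choose a))"
    by (rule mult_right_mono[OF key]) simp
  also have "\<dots> \<le> (real n - real a) * real b * (real (n choose a) * real b ^ a)"
    by (rule mult_left_mono[OF IH]) (use Suc.prems in simp)
  also have "\<dots> = real b * real b ^ a * (real (n - a) * real (n choose a))"
    unfolding na by (simp add: algebra_simps)
  also have "\<dots> = real (Suc a) * (real (n choose Suc a) * real b ^ Suc a)"
    unfolding idn[symmetric] by (simp add: algebra_simps)
  finally show ?case by (simp only: mult_le_cancel_left_pos of_nat_0_less_iff zero_less_Suc)
qed

lemma mult_ln_ge_neg_inverse_exp:
  fixes t :: real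
  assumes "t > 0"
  shows "t * ln t \<ge> - 1 / exp 1"
proof -
  have "ln (1 / (exp 1 * t)) \<le> 1 / (exp 1 * t) - 1"
    using assms by (intro ln_le_minus_one) simp
  also have "ln (1 / (exp 1 * t)) = - 1 - ln t"
    using assms by (simp add: ln_div ln_mult)
  finally have "- ln t \<le> 1 / (exp 1 * t)" by simp
  then have "t * (- ln t) \<le> t * (1 / (exp 1 * t))"
    using assms by (intro mult_left_mono) auto
  then show ?thesis using assms by simp
qed

lemma mult_ln_div_ge_at_round_up:
  fixes a :: nat and t c :: real
  assumes "t > 0" "t \<le> a" "a < t + 1" "c \<ge> 2 * (t + 1)"
  shows "a * ln (c / a) \<ge> t * ln (c / t) - t"
proof (cases "a = 1")
  case True
  then have "t \<le> 1" using assms by simp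
  have "ln 2 \<le> ln c" using assms by simp
  then have "(1 - t) * ln 2 \<le> (1 - t) * ln c"
    using \<open>t \<le> 1\<close> by (intro mult_left_mono) auto
  then have "ln 2 - t * ln 2 \<le> (1 - t) * ln c" by (simp add: left_diff_distrib)
  moreover have "t * ln 2 \<le> t" using ln_2_less_1 assms(1) by simp
  moreover have "1 / exp 1 \<le> (1::real) / 2"
    using exp_ge_add_one_self[of 1] by (simp add: divide_simps)
  ultimately have "0 \<le> (1 - t) * ln c + t * ln t + t"
    using mult_ln_ge_neg_inverse_exp[OF assms(1)] ln2_ge_two_thirds by linarith
  moreover have "t * ln (c / t) = t * ln c - t * ln t"
    using assms by (simp add: ln_div right_diff_distrib)
  ultimately show ?thesis using True by (simp add: left_diff_distrib)
next
  case False
  then have "t \<ge> 1" "a > 0" using assms by linarith+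
  have "ln (c / a) \<ge> 0" using assms by simp
  then have "t * ln (c / a) \<le> a * ln (c / a)"
    using assms(2) by (intro mult_right_mono) auto
  moreover have "t * ln (c / t) = t * ln (c / a) + t * ln (a / t)"
    using assms \<open>a > 0\<close> by (simp add: ln_div distrib_left[symmetric])
  moreover have "t * ln (a / t) \<le> t * (a / t - 1)"
    using assms \<open>a > 0\<close> by (intro mult_left_mono ln_le_minus_one) auto
  then have "t * ln (a / t) \<le> a - t" using assms by (simp add: right_diff_distrib)
  ultimately show ?thesis using assms \<open>t \<ge> 1\<close> by linarith
qed

lemma approx_capable_ln_bound:
  fixes \<Delta> :: real and a :: nat
  assumes cap: "approx_capable m n M \<Delta> D" and "\<Delta> \<ge> 1"
    and "D \<le> n" "1 \<le> a" "\<Delta>\<^sup>2 * a < D"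
  shows "a * ln (n / (\<Delta>\<^sup>2 * a)) \<le> m * ln 2"
proof -
  define b where "b = nat \<lfloor>\<Delta>\<^sup>2 * a\<rfloor>"
  have "1 * real a \<le> \<Delta>\<^sup>2 * a"
    using \<open>\<Delta> \<ge> 1\<close> by (intro mult_right_mono one_le_power) auto
  then have "a \<le> \<Delta>\<^sup>2 * a" by simp
  then have b: "b \<le> \<Delta>\<^sup>2 * a" "\<Delta>\<^sup>2 * a < b + 1"
    using \<open>1 \<le> a\<close> by (simp_all add: b_def) linarith
  then have "b + 1 \<le> D" "a \<le> b" using assms \<open>a \<le> \<Delta>\<^sup>2 * a\<close> by linarith+
  then have "b \<le> n" "b > 0" using assms by linarith+
  have "real (n choose a) \<le> 2 ^ m * (b choose a)"
    using approx_capable_choose_le[OF cap] assms b \<open>b + 1 \<le> D\<close> of_nat_mono by fastforce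
  then have "real (n choose a) * real b ^ a \<le> 2 ^ m * (b choose a) * real b ^ a"
    by (rule mult_right_mono) simp
  with power_mult_choose_le[OF \<open>a \<le> b\<close> \<open>b \<le> n\<close>]
  have "real n ^ a * (b choose a) \<le> (2 ^ m * real b ^ a) * (b choose a)"
    by (simp add: mult_ac)
  then have "real n ^ a \<le> 2 ^ m * real b ^ a"
    using \<open>a \<le> b\<close> by (simp add: mult_le_cancel_right_pos)
  then have "(n / b) ^ a \<le> 2 ^ m" using \<open>b > 0\<close> by (simp add: power_divide divide_le_eq)
  then have "ln ((n / b) ^ a) \<le> ln (2 ^ m)"
    using \<open>b \<le> n\<close> \<open>b > 0\<close> by (subst ln_le_cancel_iff) auto
  then have "a * ln (n / b) \<le> m * ln 2"
    using \<open>b \<le> n\<close> \<open>b > 0\<close> by (simp add: ln_realpow)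
  moreover have "ln (n / (\<Delta>\<^sup>2 * a)) \<le> ln (n / b)"
    using b \<open>b \<le> n\<close> \<open>b > 0\<close> by (simp add: frac_le)
  then have "a * ln (n / (\<Delta>\<^sup>2 * a)) \<le> a * ln (n / b)" by (rule mult_left_mono) simp
  ultimately show ?thesis by linarith
qed

theorem theorem2:
  fixes m n D :: nat and \<Delta> :: real and M :: "nat \<Rightarrow> nat \<Rightarrow> bool"
  assumes "\<Delta> > 1"
    and "real D \<le> real n / 2"
    and "\<Delta>\<^sup>2 < real D"
    and "approx_capable m n M \<Delta> D"
  shows "real m \<ge> (real D / \<Delta>\<^sup>2 - 1) * log 2 (real n / (real D - \<Delta>\<^sup>2))
                  - (real D / \<Delta>\<^sup>2 - 1) * log 2 (exp 1)"
proof -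
  define t where "t = D / \<Delta>\<^sup>2 - 1"
  define c where "c = n / \<Delta>\<^sup>2"
  define a where "a = nat \<lceil>t\<rceil>"
  have "\<Delta>\<^sup>2 > 0" using assms(1) by simp
  then have "t > 0" and D_eq: "D = \<Delta>\<^sup>2 * (t + 1)" and c_ge: "c \<ge> 2 * (t + 1)"
    using assms(2,3) by (simp_all add: t_def c_def field_simps)
  have a: "1 \<le> a" "t \<le> a" "a < t + 1"
    using \<open>t > 0\<close> by (simp_all add: a_def) linarith+
  have "c / a = n / (\<Delta>\<^sup>2 * a)" by (simp add: c_def)
  then have "a * ln (c / a) \<le> m * ln 2"
    using approx_capable_ln_bound[OF assms(4)] assms(1,2) a \<open>\<Delta>\<^sup>2 > 0\<close> D_eq by simp
  moreover have "t * ln (c / t) - t \<le> a * ln (c / a)"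
    using mult_ln_div_ge_at_round_up \<open>t > 0\<close> a c_ge by blast
  moreover have "log 2 (n / (D - \<Delta>\<^sup>2)) = ln (c / t) / ln 2"
    by (simp add: D_eq log_def c_def algebra_simps)
  ultimately show ?thesis
    by (simp add: log_def t_def[symmetric] divide_le_eq field_simps)
qed

end
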